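(* Let $(\mathbb{K},\partial)$ be a differential field whose field of constants $C$ is algebraically closed of characteristic zero, and let $L=\partial^n+u_{n-2}\partial^{n-2}+\dots+u_1\partial+u_0\in\mathbb{K}[\partial]$ be a differential operator of order $n$ in normal form. Let $\mathcal{G}=\{G_0=1,G_1,\ldots,G_{t-1}\}$ be a Goodearl basis of the centralizer $\mathcal{C}(L)$ as a $C[L]$-module, and let $\phi_L:C[\lambda,\mu_1,\ldots,\mu_{t-1}]\to\mathcal{C}(L)$ be the $C$-algebra homomorphism with $\phi_L(\lambda)=L$ and $\phi_L(\mu_i)=G_i$. Let $q\in C[\lambda,\mu_1,\ldots,\mu_{t-1}]$ be linear in $\mu_1,\ldots,\mu_{t-1}$, i.e. $q=q_0(\lambda)+q_1(\lambda)\mu_1+\dots+q_{t-1}(\lambda)\mu_{t-1}$ with $q_i\in C[\lambda]$. Then $q\in\mathrm{BC}(L):=\ker(\phi_L)$ if and only if $q=0$.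
   Context: $\mathbb{K}[\partial]$ is the ring of linear ordinary differential operators with coefficients in $\mathbb{K}$ (with $\partial a=a\partial+\partial(a)$). The centralizer of $L$ is $\mathcal{C}(L)=\{A\in\mathbb{K}[\partial]: LA=AL\}$, a commutative ring containing $C[L]$. A Goodearl basis of $\mathcal{C}(L)$ is a basis $\{G_0=1,G_1,\ldots,G_{t-1}\}$ of $\mathcal{C}(L)$ as a $C[L]$-module such that: each $G_k$ has minimal order among the elements $Q\in\mathcal{C}(L)$ with $\mathrm{ord}(Q)\equiv\mathrm{ord}(G_k)\pmod n$; and the classes $\mathrm{ord}(G_k)\bmod n$, $k=0,\ldots,t-1$, are pairwise distinct and form the set of all classes modulo $n$ of orders of elements of $\mathcal{C}(L)$ (a subgroup of $\mathbb{Z}/n\mathbb{Z}$ of cardinality $t$). $\mathrm{BC}(L)=\ker(\phi_L)$ is called the Burchnall–Chaundy ideal of $L$. *)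

theory Defs
  imports "HOL-Computational_Algebra.Polynomial"
begin

text \<open>Differential operators in K[\<partial>] are represented by their coefficient
  polynomials: the 'a poly A stands for the operator sum over i of (coeff A i) \<partial>^i.
  Addition is polynomial addition; the (non-commutative) product is given by
  the Leibniz rule: \<partial>^i b = sum over k of (i choose k) (d^k b) \<partial>^(i-k).\<close>

definition derivation :: "('a::field \<Rightarrow> 'a) \<Rightarrow> bool" where
  "derivation d \<longleftrightarrow> (\<forall>x y. d (x + y) = d x + d y) \<and> (\<forall>x y. d (x * y) = x * d y + d x * y)"

definition constants :: "('a::field \<Rightarrow> 'a) \<Rightarrow> 'a set" where
  "constants d = {c. d c = 0}"

definition alg_closed_constants :: "('a::field \<Rightarrow> 'a) \<Rightarrow> bool" where
  "alg_closed_constants d \<longleftrightarrow>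
     (\<forall>p::'a poly. (\<forall>i. coeff p i \<in> constants d) \<and> degree p > 0 \<longrightarrow>
        (\<exists>x\<in>constants d. poly p x = 0))"

definition opmul :: "('a::field \<Rightarrow> 'a) \<Rightarrow> 'a poly \<Rightarrow> 'a poly \<Rightarrow> 'a poly" where
  "opmul d A B = (\<Sum>i\<le>degree A. \<Sum>j\<le>degree B. \<Sum>k\<le>i.
       monom (of_nat (i choose k) * coeff A i * (d ^^ k) (coeff B j)) (i + j - k))"

fun oppow :: "('a::field \<Rightarrow> 'a) \<Rightarrow> 'a poly \<Rightarrow> nat \<Rightarrow> 'a poly" where
  "oppow d L 0 = 1"
| "oppow d L (Suc m) = opmul d L (oppow d L m)"

definition cpoly :: "('a::field \<Rightarrow> 'a) \<Rightarrow> 'a poly \<Rightarrow> bool" where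
  "cpoly d p \<longleftrightarrow> (\<forall>i. coeff p i \<in> constants d)"

definition evalL :: "('a::field \<Rightarrow> 'a) \<Rightarrow> 'a poly \<Rightarrow> 'a poly \<Rightarrow> 'a poly" where
  "evalL d p L = (\<Sum>i\<le>degree p. smult (coeff p i) (oppow d L i))"

definition centralizer :: "('a::field \<Rightarrow> 'a) \<Rightarrow> 'a poly \<Rightarrow> 'a poly set" where
  "centralizer d L = {A. opmul d L A = opmul d A L}"

definition normal_form :: "'a::field poly \<Rightarrow> nat \<Rightarrow> bool" where
  "normal_form L n \<longleftrightarrow> n \<ge> 1 \<and> degree L = n \<and> lead_coeff L = 1 \<and> coeff L (n - 1) = 0"

text \<open>The linear combination sum_i p_i(L) G_i; this is phi_L applied to
  q = p_0(\<lambda>) + p_1(\<lambda>) \<mu>_1 + ... + p_{t-1}(\<lambda>) \<mu>_{t-1} (with G_0 = 1).\<close>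
definition lincomb :: "('a::field \<Rightarrow> 'a) \<Rightarrow> 'a poly \<Rightarrow> 'a poly list \<Rightarrow> 'a poly list \<Rightarrow> 'a poly" where
  "lincomb d L G ps = (\<Sum>i<length G. opmul d (evalL d (ps ! i) L) (G ! i))"

definition goodearl_basis :: "('a::field \<Rightarrow> 'a) \<Rightarrow> 'a poly \<Rightarrow> 'a poly list \<Rightarrow> bool" where
  "goodearl_basis d L G \<longleftrightarrow>
     (let n = degree L; t = length G in
       t \<ge> 1 \<and> G ! 0 = 1 \<and> (\<forall>k<t. G ! k \<in> centralizer d L) \<and>
       \<comment> \<open>generating set of C(L) as C[L]-module\<close>
       (\<forall>A\<in>centralizer d L. \<exists>ps. length ps = t \<and> (\<forall>p\<in>set ps. cpoly d p) \<and> A = lincomb d L G ps) \<and>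
       \<comment> \<open>linearly independent over C[L]\<close>
       (\<forall>ps. length ps = t \<and> (\<forall>p\<in>set ps. cpoly d p) \<and> lincomb d L G ps = 0 \<longrightarrow> (\<forall>p\<in>set ps. p = 0)) \<and>
       \<comment> \<open>minimality of orders within residue classes\<close>
       (\<forall>k<t. \<forall>Q\<in>centralizer d L. Q \<noteq> 0 \<and> degree Q mod n = degree (G ! k) mod n
            \<longrightarrow> degree (G ! k) \<le> degree Q) \<and>
       \<comment> \<open>pairwise distinct classes\<close>
       (\<forall>i<t. \<forall>j<t. i \<noteq> j \<longrightarrow> degree (G ! i) mod n \<noteq> degree (G ! j) mod n) \<and>
       \<comment> \<open>they are all classes of orders of elements of C(L)\<close>
       {degree Q mod n | Q. Q \<in> centralizer d L \<and> Q \<noteq> 0} = {degree (G ! k) mod n | k. k < t})"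

end

theory Submission
  imports Defs
begin

lemma lincomb_zero_coeffs:
  assumes "length ps = length G" and "\<forall>p\<in>set ps. p = 0"
  shows "lincomb d L G ps = 0"
proof -
  have "ps ! i = 0" if "i < length G" for i
    using assms that by (metis nth_mem)
  then show ?thesis
    by (simp add: lincomb_def evalL_def opmul_def)
qed

lemma goodearl_basis_lincomb_eq_0_imp:
  assumes "goodearl_basis d L G"
    and "length ps = length G" and "\<forall>p\<in>set ps. cpoly d p"
    and "lincomb d L G ps = 0"
  shows "\<forall>p\<in>set ps. p = 0"
  using assms unfolding goodearl_basis_def Let_def by blast

theorem lemma4p4:
  fixes d :: "'a::field_char_0 \<Rightarrow> 'a" and L :: "'a poly" and n :: nat
    and G :: "'a poly list" and qs :: "'a poly list"
  assumes "derivation d"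
    and "alg_closed_constants d"
    and "normal_form L n"
    and "goodearl_basis d L G"
    and "length qs = length G"
    and "\<forall>q\<in>set qs. cpoly d q"
  shows "lincomb d L G qs = 0 \<longleftrightarrow> (\<forall>q\<in>set qs. q = 0)"
  using goodearl_basis_lincomb_eq_0_imp[OF assms(4-6)] lincomb_zero_coeffs[OF assms(5)]
  by blast

end
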